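(* Let $\ell\ge2$ and $k\ge1$, and let $\lambda$ be an $\ell$-core with exactly $k$ nonzero parts. Then: (1) in each row of $\lambda$, exactly one of the boxes deleted in forming $\widetilde{\Phi_\ell^k}(\lambda)$ is a skew box of $\lambda$ with respect to $\ell$; (2) if $\mathsf{B}$ is a box of $\lambda$ that is not deleted, and $\widetilde{\mathsf{B}}$ is the corresponding box of $\widetilde{\Phi_\ell^k}(\lambda)$, then $\mathsf{B}$ is a skew box of $\lambda$ with respect to $\ell$ if and only if $\widetilde{\mathsf{B}}$ is a skew box of $\widetilde{\Phi_\ell^k}(\lambda)$ with respect to $\ell-1$.
   Context: Partitions are in English notation; box $(x,y)$ is in row $x$, column $y$. The hook length $h^\mu_{\mathsf{B}}$ of a box $\mathsf{B}=(a,c)$ of $\mu$ is the number of boxes of $\mu$ in row $a$ weakly right of $\mathsf{B}$ plus the number in column $c$ strictly below $\mathsf{B}$. An $m$-core is a partition none of whose hook lengths is divisible by $m$. For a partition $\mu$ and integer $m$, a box $\mathsf{B}$ of $\mu$ is a skew box with respect to $m$ if $h^\mu_{\mathsf{B}}\le m$ (i.e. it is not among the boxes of hook length $>m$). For an $\ell$-core $\lambda$ with $k$ nonzero parts, $\widetilde{\Phi_\ell^k}(\lambda)$ is obtained from the diagram of $\lambda$ by deleting every column $y$ with $h^\lambda_{(1,y)}\equiv h^\lambda_{(1,1)}\pmod\ell$ (in particular column 1) and shifting the remaining columns left, preserving their order; each non-deleted box $\mathsf{B}$ of $\lambda$ thereby corresponds to a box $\widetilde{\mathsf{B}}$ of $\widetilde{\Phi_\ell^k}(\lambda)$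 in the same row. Equivalently, $\widetilde{\Phi_\ell^k}(\lambda)$ is the transpose of $\Phi_\ell^k(\lambda^{tr})$, where for an $\ell$-core $\nu$ with first part $k$, $\Phi_\ell^k(\nu)$ deletes all rows $x$ of $\nu$ with $h^\nu_{(x,1)}\equiv h^\nu_{(1,1)}\pmod\ell$. It is known that $\widetilde{\Phi_\ell^k}(\lambda)$ is an $(\ell-1)$-core with at most $k$ nonzero parts. *)

theory Defs
  imports Main
begin

text \<open>A partition is a list of its parts (English notation, 1-indexed rows);
  row x = x-th part (0 beyond the list). Boxes are pairs (row, column), 1-indexed.\<close>

definition row :: "nat list \<Rightarrow> nat \<Rightarrow> nat" where
  "row lam x = (if 1 \<le> x \<and> x \<le> length lam then lam ! (x - 1) else 0)"

definition is_partition :: "nat list \<Rightarrow> bool" where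
  "is_partition lam \<longleftrightarrow> sorted (rev lam) \<and> 0 \<notin> set lam"

definition in_diagram :: "nat list \<Rightarrow> nat \<times> nat \<Rightarrow> bool" where
  "in_diagram lam B \<longleftrightarrow> 1 \<le> fst B \<and> 1 \<le> snd B \<and> snd B \<le> row lam (fst B)"

definition col :: "nat list \<Rightarrow> nat \<Rightarrow> nat" where
  "col lam c = length (filter (\<lambda>r. c \<le> r) lam)"

definition hook :: "nat list \<Rightarrow> nat \<times> nat \<Rightarrow> nat" where
  "hook lam B = (row lam (fst B) - snd B + 1) + (col lam (snd B) - fst B)"

definition is_core :: "nat \<Rightarrow> nat list \<Rightarrow> bool" where
  "is_core m lam \<longleftrightarrow> (\<forall>B. in_diagram lam B \<longrightarrow> \<not> m dvd hook lam B)"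

definition skew_box :: "nat \<Rightarrow> nat list \<Rightarrow> nat \<times> nat \<Rightarrow> bool" where
  "skew_box m lam B \<longleftrightarrow> in_diagram lam B \<and> hook lam B \<le> m"

definition deleted_cols :: "nat \<Rightarrow> nat list \<Rightarrow> nat set" where
  "deleted_cols l lam = {y. 1 \<le> y \<and> y \<le> row lam 1 \<and>
      hook lam (1, y) mod l = hook lam (1, 1) mod l}"

text \<open>tilde-Phi: delete those columns and shift remaining ones left
  (rows that become empty are kept as zero parts; they contribute no boxes).\<close>
definition phi_tilde :: "nat \<Rightarrow> nat list \<Rightarrow> nat list" where
  "phi_tilde l lam = map (\<lambda>r. r - card {y \<in> deleted_cols l lam. y \<le> r}) lam"

definition box_map :: "nat \<Rightarrow> nat list \<Rightarrow> nat \<times> nat \<Rightarrow> nat \<times> nat" where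
  "box_map l lam B = (fst B, snd B - card {y' \<in> deleted_cols l lam. y' < snd B})"

end

theory Submission
  imports Defs
begin

text \<open>Along a row of an \<open>\<ell>\<close>-core the hook lengths strictly decrease, and every hook
  length \<open>h > \<ell>\<close> is followed further right by the hook length \<open>h - \<ell>\<close>: otherwise the
  skipped value is witnessed by a lower row ending exactly where the hooks jump past it, and
  that row would contain a box of hook length \<open>\<ell>\<close>. Hence each row contains exactly one box
  of hook length below \<open>\<ell>\<close> in every residue class occurring in it, which gives (1), since
  a column is deleted iff its hook lengths agree mod \<open>\<ell>\<close> with those of column 1 in every row.
  For (2), deleting columns never lengthens a hook, which settles one direction. Conversely,
  if \<open>h(x,y) > \<ell>\<close> then the box \<open>(x,z)\<close> with hook \<open>h(x,y) - \<ell>\<close> satisfies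
  \<open>z - y + col y - x \<ge> \<ell>\<close>, and at most one deleted column lies in \<open>(y,z]\<close> because two
  deleted columns in one row have hooks differing by a positive multiple of \<open>\<ell>\<close>; so the
  hook of \<open>\<widetilde>B\<close> is still at least \<open>\<ell>\<close>.\<close>

lemma row_antimono:
  assumes "is_partition lam" "1 \<le> x1" "x1 \<le> x2"
  shows "row lam x2 \<le> row lam x1"
  using assms sorted_rev_nth_mono[of lam "x1 - 1" "x2 - 1"]
  unfolding row_def is_partition_def by auto

lemma row_ge_1:
  assumes "is_partition lam" "1 \<le> x" "x \<le> length lam"
  shows "1 \<le> row lam x"
proof -
  have "lam ! (x - 1) \<in> set lam" using assms by auto
  then show ?thesis using assms unfolding row_def is_partition_def
    by (metis less_one not_less)
qed

lemma col_antimono: "c1 \<le> c2 \<Longrightarrow> col lam c2 \<le> col lam c1"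
  unfolding col_def by (induction lam) auto

lemma le_col_iff_le_row:
  assumes P: "is_partition lam" and "1 \<le> x" "1 \<le> c"
  shows "x \<le> col lam c \<longleftrightarrow> c \<le> row lam x"
proof -
  let ?S = "{i. i < length lam \<and> c \<le> lam ! i}"
  have col_card: "col lam c = card ?S"
    unfolding col_def by (rule length_filter_conv_card)
  have sorted: "i \<le> j \<Longrightarrow> j < length lam \<Longrightarrow> lam ! j \<le> lam ! i" for i j
    using P sorted_rev_nth_mono[of lam i j] unfolding is_partition_def by auto
  show ?thesis
  proof
    assume x_le: "x \<le> col lam c"
    show "c \<le> row lam x"
    proof (rule ccontr)
      assume c_gt: "\<not> c \<le> row lam x"
      have "?S \<subseteq> {0..<x - 1}"
      proof
        fix i assume "i \<in> ?S"
        moreover have "i < x - 1" if "i < length lam" "c \<le> lam ! i"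
        proof (rule ccontr)
          assume "\<not> i < x - 1"
          then have "x \<le> length lam" using that(1) by linarith
          then show False
            using that sorted[of "x - 1" i] \<open>\<not> i < x - 1\<close> c_gt assms(2) unfolding row_def by auto
        qed
        ultimately show "i \<in> {0..<x - 1}" by auto
      qed
      then have "card ?S \<le> x - 1" using card_mono[of "{0..<x - 1}"] by fastforce
      then show False using x_le col_card assms(2) by auto
    qed
  next
    assume c_le: "c \<le> row lam x"
    then have x_len: "x \<le> length lam" using assms(3) unfolding row_def by (auto split: if_splits)
    have "{0..<x} \<subseteq> ?S"
    proof
      fix i assume "i \<in> {0..<x}"
      then show "i \<in> ?S" using c_le x_len assms(2) sorted[of i "x - 1"] unfolding row_def
        by (auto intro: order.trans)
    qed
    then have "x \<le> card ?S" using card_mono[of ?S "{0..<x}"] by (simp add: col_card[symmetric])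
    then show "x \<le> col lam c" using col_card by simp
  qed
qed

lemma row_eq_if_col_bounds:
  assumes "is_partition lam" "1 \<le> x" "1 \<le> c" "col lam (c + 1) < x" "x \<le> col lam c"
  shows "row lam x = c"
  using assms le_col_iff_le_row[of lam x c] le_col_iff_le_row[of lam x "c + 1"] by simp

lemma hook_int_eq:
  assumes "is_partition lam" "in_diagram lam (x, y)"
  shows "int (hook lam (x, y)) = int (row lam x) - int y + 1 + int (col lam y) - int x"
  using assms le_col_iff_le_row[of lam x y] unfolding hook_def in_diagram_def by auto

lemma hook_strict_antimono:
  assumes "is_partition lam" "in_diagram lam (x, z1)" "in_diagram lam (x, z2)" "z1 < z2"
  shows "hook lam (x, z2) < hook lam (x, z1)"
  using hook_int_eq[OF assms(1,2)] hook_int_eq[OF assms(1,3)] col_antimono[of z1 z2 lam] assms(4)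
  by linarith

lemma hook_antimono:
  assumes "is_partition lam" "in_diagram lam (x, z1)" "in_diagram lam (x, z2)" "z1 \<le> z2"
  shows "hook lam (x, z2) \<le> hook lam (x, z1)"
  using hook_strict_antimono[OF assms(1-3)] assms(4) by (cases "z1 = z2") auto

lemma core_not_hook_eq: "is_core l lam \<Longrightarrow> in_diagram lam B \<Longrightarrow> hook lam B \<noteq> l"
  unfolding is_core_def by (metis dvd_refl)

lemma core_hook_diff_in_row:
  assumes P: "is_partition lam" and C: "is_core l lam" and l: "0 < l"
    and B: "in_diagram lam (x, y)" and hook_gt: "l < hook lam (x, y)"
  shows "\<exists>z. y < z \<and> z \<le> row lam x \<and> hook lam (x, z) = hook lam (x, y) - l"
proof (rule ccontr)
  assume skipped: "\<not> ?thesis"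
  define t where "t = hook lam (x, y) - l"
  define Z where "Z = {z. y \<le> z \<and> z \<le> row lam x \<and> t < hook lam (x, z)}"
  define z0 where "z0 = Max Z"
  have "y \<in> Z" using B hook_gt l unfolding Z_def t_def in_diagram_def by auto
  moreover have "finite Z" unfolding Z_def by auto
  ultimately have "z0 \<in> Z" and z0_max: "\<And>z. z \<in> Z \<Longrightarrow> z \<le> z0"
    unfolding z0_def using Max_in by auto
  then have y_z0: "y \<le> z0" and z0_row: "z0 \<le> row lam x" and hook_z0: "t < hook lam (x, z0)"
    unfolding Z_def by auto
  have x1: "1 \<le> x" and y1: "1 \<le> y" using B unfolding in_diagram_def by auto
  have B_z0: "in_diagram lam (x, z0)" using x1 y1 y_z0 z0_row unfolding in_diagram_def by auto
  \<comment> \<open>the row ending in column \<open>z0\<close>, whose box in column \<open>y\<close> will have hook length \<open>l\<close>\<close>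
  define x' where "x' = x + t + z0 - row lam x"
  have "x' \<le> col lam z0"
    using hook_int_eq[OF P B_z0] hook_z0 z0_row unfolding x'_def by linarith
  moreover have "col lam (z0 + 1) < x'"
  proof (cases "z0 < row lam x")
    case True
    have B_next: "in_diagram lam (x, z0 + 1)" using True x1 unfolding in_diagram_def by auto
    have "z0 + 1 \<notin> Z" using z0_max by fastforce
    moreover have "hook lam (x, z0 + 1) \<noteq> t" using skipped True y_z0 unfolding t_def by force
    ultimately have "hook lam (x, z0 + 1) < t" using True y_z0 unfolding Z_def by auto
    then show ?thesis using hook_int_eq[OF P B_next] True unfolding x'_def by linarith
  next
    case False
    then have "z0 = row lam x" using z0_row by simp
    then show ?thesis
      using le_col_iff_le_row[OF P x1, of "row lam x + 1"] hook_gt unfolding x'_def t_def by simp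
  qed
  ultimately have x'1: "1 \<le> x'" and row_x': "row lam x' = z0"
    using row_eq_if_col_bounds[OF P _ order.trans[OF y1 y_z0]] by auto
  have B_x': "in_diagram lam (x', y)" using x'1 y1 y_z0 row_x' unfolding in_diagram_def by simp
  have "int (hook lam (x', y)) = int l"
    using hook_int_eq[OF P B_x'] hook_int_eq[OF P B] row_x' x'1 hook_gt
    unfolding x'_def t_def by (simp add: of_nat_diff)
  then show False using core_not_hook_eq[OF C B_x'] by simp
qed

lemma core_hook_diff_mult_in_row:
  assumes P: "is_partition lam" and C: "is_core l lam" and l: "0 < l"
    and B: "in_diagram lam (x, y)"
  shows "n * l < hook lam (x, y) \<Longrightarrow>
    \<exists>z. y \<le> z \<and> z \<le> row lam x \<and> hook lam (x, z) = hook lam (x, y) - n * l"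
proof (induction n)
  case 0
  then show ?case using B unfolding in_diagram_def by auto
next
  case (Suc n)
  then obtain z where z: "y \<le> z" "z \<le> row lam x" "hook lam (x, z) = hook lam (x, y) - n * l"
    by auto
  have B_z: "in_diagram lam (x, z)" using z B unfolding in_diagram_def by auto
  have "l < hook lam (x, z)" using z(3) Suc.prems by simp
  then obtain z' where "z < z'" "z' \<le> row lam x" "hook lam (x, z') = hook lam (x, z) - l"
    using core_hook_diff_in_row[OF P C l B_z] by blast
  then show ?case using z by (intro exI[of _ z']) (auto simp: diff_diff_add)
qed

lemma deleted_cols_iff_hook_mod:
  assumes P: "is_partition lam" and B: "in_diagram lam (x, z)"
  shows "z \<in> deleted_cols l lam \<longleftrightarrow> hook lam (x, z) mod l = hook lam (x, 1) mod l"
proof -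
  have x1: "1 \<le> x" and z1: "1 \<le> z" and z_row: "z \<le> row lam x"
    using B unfolding in_diagram_def by auto
  have "row lam x \<le> row lam 1" using row_antimono[OF P, of 1 x] x1 by simp
  then have boxes: "in_diagram lam (x, 1)" "in_diagram lam (1, z)" "in_diagram lam (1, 1)"
    using B unfolding in_diagram_def by auto
  \<comment> \<open>moving from row \<open>x\<close> to row 1 shifts every hook length by the same amount \<open>c\<close>\<close>
  define c where "c = int (row lam 1) - int (row lam x) + int x - 1"
  have "int (hook lam (1, z)) = int (hook lam (x, z)) + c"
    and "int (hook lam (1, 1)) = int (hook lam (x, 1)) + c"
    using hook_int_eq[OF P B] hook_int_eq[OF P boxes(1)] hook_int_eq[OF P boxes(2)]
      hook_int_eq[OF P boxes(3)] unfolding c_def by linarith+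
  moreover have mod_iff: "a mod l = b mod l \<longleftrightarrow> int l dvd int a - int b" for a b :: nat
    by (metis mod_eq_dvd_iff of_nat_eq_iff zmod_int)
  ultimately have "hook lam (1, z) mod l = hook lam (1, 1) mod l
      \<longleftrightarrow> hook lam (x, z) mod l = hook lam (x, 1) mod l"
    by simp
  then show ?thesis using z1 z_row \<open>row lam x \<le> row lam 1\<close> unfolding deleted_cols_def by auto
qed

lemma deleted_cols_hook_gap:
  assumes P: "is_partition lam"
    and B: "in_diagram lam (x, w1)" "in_diagram lam (x, w2)" "w1 < w2"
    and D: "w1 \<in> deleted_cols l lam" "w2 \<in> deleted_cols l lam"
  shows "hook lam (x, w2) + l \<le> hook lam (x, w1)"
proof -
  have lt: "hook lam (x, w2) < hook lam (x, w1)" using hook_strict_antimono[OF P B] .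
  moreover have "hook lam (x, w1) mod l = hook lam (x, w2) mod l"
    using deleted_cols_iff_hook_mod[OF P B(1)] deleted_cols_iff_hook_mod[OF P B(2)] D by simp
  then have "l dvd hook lam (x, w1) - hook lam (x, w2)"
    using lt mod_eq_dvd_iff_nat by simp
  ultimately have "l \<le> hook lam (x, w1) - hook lam (x, w2)" by (simp add: dvd_imp_le)
  then show ?thesis using lt by linarith
qed

lemma row_unique_deleted_skew_box:
  assumes P: "is_partition lam" and C: "is_core l lam" and l: "0 < l"
    and x: "1 \<le> x" "x \<le> length lam"
  shows "\<exists>!y. y \<in> deleted_cols l lam \<and> in_diagram lam (x, y) \<and> skew_box l lam (x, y)"
proof -
  define H where "H = hook lam (x, 1)"
  have B1: "in_diagram lam (x, 1)" using row_ge_1[OF P x] x unfolding in_diagram_def by auto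
  have "H mod l \<noteq> 0" using C B1 unfolding is_core_def H_def by (metis dvd_eq_mod_eq_0)
  then have "H div l * l < H" by (metis div_mult_mod_eq less_add_same_cancel1 not_gr_zero)
  then obtain z where z: "1 \<le> z" "z \<le> row lam x" "hook lam (x, z) = H - H div l * l"
    using core_hook_diff_mult_in_row[OF P C l B1] unfolding H_def by blast
  have hook_z: "hook lam (x, z) = H mod l" using z(3) by (simp add: minus_div_mult_eq_mod)
  have B_z: "in_diagram lam (x, z)" using B1 z unfolding in_diagram_def by auto
  have hook_eq: "hook lam (x, w) = H mod l"
    if "w \<in> deleted_cols l lam" "in_diagram lam (x, w)" "skew_box l lam (x, w)" for w
  proof -
    have "hook lam (x, w) < l"
      using that(3) core_not_hook_eq[OF C that(2)] unfolding skew_box_def by simp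
    then show ?thesis using deleted_cols_iff_hook_mod[OF P that(2)] that(1) unfolding H_def by simp
  qed
  show ?thesis
  proof (rule ex1I[of _ z])
    show "z \<in> deleted_cols l lam \<and> in_diagram lam (x, z) \<and> skew_box l lam (x, z)"
      using deleted_cols_iff_hook_mod[OF P B_z] hook_z B_z l unfolding skew_box_def H_def
      by (simp add: less_imp_le)
  next
    fix w assume "w \<in> deleted_cols l lam \<and> in_diagram lam (x, w) \<and> skew_box l lam (x, w)"
    then show "w = z"
      using hook_eq hook_z hook_strict_antimono[OF P B_z, of w] hook_strict_antimono[OF P _ B_z, of w]
      by (metis linorder_neqE_nat less_irrefl)
  qed
qed

text \<open>\<open>kept_cols D r\<close> is the number of columns among \<open>1..r\<close> that survive deleting \<open>D\<close>;
  a row of length \<open>r\<close> of \<open>\<lambda>\<close> becomes a row of length \<open>kept_cols D r\<close>, and a kept box in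
  column \<open>y\<close> moves to column \<open>kept_cols D y\<close>.\<close>

definition kept_cols :: "nat set \<Rightarrow> nat \<Rightarrow> nat" where
  "kept_cols D r = card ({1..r} - D)"

lemma kept_cols_eq: "0 \<notin> D \<Longrightarrow> r - card {z \<in> D. z \<le> r} = kept_cols D r"
proof -
  assume "0 \<notin> D"
  then have "{z \<in> D. z \<le> r} = {1..r} \<inter> D" by (auto simp: Suc_le_eq) (metis neq0_conv)
  then show ?thesis unfolding kept_cols_def by (simp add: card_Diff_subset_Int)
qed

lemma kept_cols_mono: "a \<le> b \<Longrightarrow> kept_cols D a \<le> kept_cols D b"
  unfolding kept_cols_def by (rule card_mono) auto

lemma kept_cols_add: "a \<le> b \<Longrightarrow> kept_cols D b = kept_cols D a + card ({a<..b} - D)"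
proof -
  assume "a \<le> b"
  then have "{1..b} - D = ({1..a} - D) \<union> ({a<..b} - D)" by auto
  moreover have "({1..a} - D) \<inter> ({a<..b} - D) = {}" by auto
  ultimately show ?thesis unfolding kept_cols_def by (simp add: card_Un_disjoint)
qed

lemma kept_cols_le_iff: "b \<notin> D \<Longrightarrow> kept_cols D b \<le> kept_cols D a \<longleftrightarrow> b \<le> a"
proof
  assume "b \<notin> D" "kept_cols D b \<le> kept_cols D a"
  moreover have "a < b \<Longrightarrow> b \<notin> D \<Longrightarrow> kept_cols D a < kept_cols D b"
    using kept_cols_add[of a b D] by (fastforce simp: card_gt_0_iff)
  ultimately show "b \<le> a" by (meson not_le)
qed (rule kept_cols_mono)

lemma hook_phi_tilde:
  assumes P: "is_partition lam" and B: "in_diagram lam (x, y)"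
    and y_kept: "y \<notin> deleted_cols l lam"
  defines "D \<equiv> deleted_cols l lam"
  shows "box_map l lam (x, y) = (x, kept_cols D y)"
    and "in_diagram (phi_tilde l lam) (x, kept_cols D y)"
    and "hook (phi_tilde l lam) (x, kept_cols D y)
           = kept_cols D (row lam x) - kept_cols D y + 1 + (col lam y - x)"
proof -
  have D0: "0 \<notin> D" unfolding D_def deleted_cols_def by auto
  have x1: "1 \<le> x" and y1: "1 \<le> y" and y_row: "y \<le> row lam x"
    using B unfolding in_diagram_def by auto
  have x_len: "x \<le> length lam" using y_row y1 unfolding row_def by (auto split: if_splits)
  have phi: "phi_tilde l lam = map (kept_cols D) lam"
    unfolding phi_tilde_def D_def[symmetric] using kept_cols_eq[OF D0] by simp
  have row_phi: "row (phi_tilde l lam) x = kept_cols D (row lam x)"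
    using x1 x_len unfolding phi row_def by simp
  have col_phi: "col (phi_tilde l lam) (kept_cols D y) = col lam y"
    unfolding col_def phi filter_map
    using kept_cols_le_iff[of y D] y_kept unfolding D_def by (simp add: comp_def)
  have "{z \<in> D. z < y} = {z \<in> D. z \<le> y}" using y_kept D_def by (auto simp: le_less)
  then show "box_map l lam (x, y) = (x, kept_cols D y)"
    unfolding box_map_def D_def[symmetric] using kept_cols_eq[OF D0, of y] by simp
  have "{y} \<subseteq> {1..y} - D" using y_kept y1 unfolding D_def by auto
  then have "1 \<le> kept_cols D y" unfolding kept_cols_def using card_mono[of "{1..y} - D" "{y}"] by simp
  then show "in_diagram (phi_tilde l lam) (x, kept_cols D y)"
    using x1 kept_cols_mono[OF y_row] row_phi unfolding in_diagram_def by simp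
  show "hook (phi_tilde l lam) (x, kept_cols D y)
      = kept_cols D (row lam x) - kept_cols D y + 1 + (col lam y - x)"
    unfolding hook_def using row_phi col_phi by simp
qed

lemma hook_phi_tilde_le:
  assumes P: "is_partition lam" and B: "in_diagram lam (x, y)"
    and y_kept: "y \<notin> deleted_cols l lam"
  shows "hook (phi_tilde l lam) (box_map l lam (x, y)) \<le> hook lam (x, y)"
proof -
  let ?D = "deleted_cols l lam"
  have "y \<le> row lam x" using B unfolding in_diagram_def by simp
  then have "kept_cols ?D (row lam x) \<le> kept_cols ?D y + (row lam x - y)"
    using kept_cols_add[of y "row lam x" ?D] card_mono[of "{y<..row lam x}" "{y<..row lam x} - ?D"]
    by auto
  then show ?thesis using hook_phi_tilde[OF P B y_kept] unfolding hook_def by simp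
qed

lemma card_deleted_cols_between_le_1:
  assumes P: "is_partition lam" and y: "in_diagram lam (x, y)" and z: "in_diagram lam (x, z)"
    and gap: "hook lam (x, y) = hook lam (x, z) + l"
  shows "card ({y<..z} \<inter> deleted_cols l lam) \<le> 1"
proof -
  have "w1 = w2" if w: "w1 \<in> {y<..z} \<inter> deleted_cols l lam" "w2 \<in> {y<..z} \<inter> deleted_cols l lam"
    and lt: "w1 < w2" for w1 w2
  proof -
    have B_w: "in_diagram lam (x, w1)" "in_diagram lam (x, w2)"
      using w y z unfolding in_diagram_def by auto
    have "hook lam (x, w1) < hook lam (x, y)" using hook_strict_antimono[OF P y B_w(1)] w(1) by simp
    moreover have "hook lam (x, z) \<le> hook lam (x, w2)" using hook_antimono[OF P B_w(2) z] w(2) by simp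
    moreover have "hook lam (x, w2) + l \<le> hook lam (x, w1)"
      using deleted_cols_hook_gap[OF P B_w lt] w by simp
    ultimately show ?thesis using gap by linarith
  qed
  then have "\<forall>w1 \<in> {y<..z} \<inter> deleted_cols l lam. \<forall>w2 \<in> {y<..z} \<inter> deleted_cols l lam. w1 = w2"
    by (metis linorder_neqE_nat)
  then show ?thesis using card_le_Suc0_iff_eq[of "{y<..z} \<inter> deleted_cols l lam"] by simp
qed

lemma core_hook_phi_tilde_ge:
  assumes P: "is_partition lam" and C: "is_core l lam" and l: "0 < l"
    and B: "in_diagram lam (x, y)" and y_kept: "y \<notin> deleted_cols l lam"
    and hook_gt: "l < hook lam (x, y)"
  shows "l \<le> hook (phi_tilde l lam) (box_map l lam (x, y))"
proof -
  let ?D = "deleted_cols l lam"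
  obtain z where z: "y < z" "z \<le> row lam x" "hook lam (x, z) = hook lam (x, y) - l"
    using core_hook_diff_in_row[OF P C l B hook_gt] by blast
  have x1: "1 \<le> x" and y1: "1 \<le> y" and y_row: "y \<le> row lam x"
    using B unfolding in_diagram_def by auto
  have B_z: "in_diagram lam (x, z)" using z x1 y1 unfolding in_diagram_def by auto
  have "card ({y<..z} \<inter> ?D) \<le> 1"
    using card_deleted_cols_between_le_1[OF P B B_z] z(3) hook_gt by simp
  moreover have "card ({y<..z} - ?D) = card {y<..z} - card ({y<..z} \<inter> ?D)"
    by (rule card_Diff_subset_Int) auto
  moreover have "card ({y<..z} - ?D) \<le> card ({y<..row lam x} - ?D)"
    by (rule card_mono) (use z in auto)
  ultimately have "kept_cols ?D y + (z - y - 1) \<le> kept_cols ?D (row lam x)"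
    using kept_cols_add[OF y_row, of ?D] by simp
  moreover have "int (hook lam (x, y)) - int (hook lam (x, z))
      = int z - int y + int (col lam y) - int (col lam z)"
    using hook_int_eq[OF P B] hook_int_eq[OF P B_z] by simp
  moreover have "x \<le> col lam z" using le_col_iff_le_row[OF P x1, of z] z y1 by simp
  ultimately show ?thesis
    using hook_phi_tilde[OF P B y_kept] kept_cols_mono[OF y_row, of ?D] z hook_gt
    unfolding hook_def by simp
qed

lemma core_skew_box_phi_tilde_iff:
  assumes P: "is_partition lam" and C: "is_core l lam" and l: "0 < l"
    and B: "in_diagram lam (x, y)" and y_kept: "y \<notin> deleted_cols l lam"
  shows "skew_box l lam (x, y) \<longleftrightarrow> skew_box (l - 1) (phi_tilde l lam) (box_map l lam (x, y))"
  using hook_phi_tilde(1,2)[OF P B y_kept] hook_phi_tilde_le[OF P B y_kept]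
    core_hook_phi_tilde_ge[OF P C l B y_kept] core_not_hook_eq[OF C B] B l
  unfolding skew_box_def by (cases "l < hook lam (x, y)") auto

theorem mainTheorem9:
  fixes l k :: nat and lam :: "nat list"
  assumes "l \<ge> 2" and "k \<ge> 1"
    and "is_partition lam" and "length lam = k"
    and "is_core l lam"
  shows "(\<forall>x. 1 \<le> x \<and> x \<le> k \<longrightarrow>
            (\<exists>!y. y \<in> deleted_cols l lam \<and> in_diagram lam (x, y) \<and> skew_box l lam (x, y)))
       \<and> (\<forall>x y. in_diagram lam (x, y) \<and> y \<notin> deleted_cols l lam \<longrightarrow>
            (skew_box l lam (x, y) \<longleftrightarrow>
             skew_box (l - 1) (phi_tilde l lam) (box_map l lam (x, y))))"
proof -
  have l: "0 < l" using assms(1) by simp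
  show ?thesis
    using row_unique_deleted_skew_box[OF assms(3,5) l] core_skew_box_phi_tilde_iff[OF assms(3,5) l]
      assms(4) by blast
qed

end
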